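(* Let $\boldsymbol V$ be a generically irreducible $(\boldsymbol{\mathfrak g}_d,K)$-module for $G(\mathbb R)=SL(2,\mathbb R)$. Then $H_{D_d}(\boldsymbol V)=0$ if and only if $\mathcal K(\boldsymbol V)=2\mathbb Z$ or $\mathcal K(\boldsymbol V)=2\mathbb Z+1$. Moreover, for $m\in\mathbb N$ (resp. $m\in\mathbb N_0$ in case 3), as $\boldsymbol{\mathfrak k}$-modules over $\mathbb C[t]$: (1) if $\mathcal K(\boldsymbol V)=\{m,m+2,m+4,\dots\}$ then $H_{D_d}(\boldsymbol V)\cong\mathbb C[t]\{v_m\otimes\tilde y\}$, whose only $\tilde h$-weight is $m-1$; (2) if $\mathcal K(\boldsymbol V)=\{-m,-m-2,\dots\}$ then $H_{D_d}(\boldsymbol V)\cong\mathbb C[t]\{v_{-m}\otimes1\}$, whose only weight is $-m+1$; (3) if $\mathcal K(\boldsymbol V)=\{-m,-m+2,\dots,m\}$ then $H_{D_d}(\boldsymbol V)\cong\mathbb C[t]\{v_m\otimes1,\ v_{-m}\otimes\tilde y\}$, whose only weights are $m+1$ and $-m-1$.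
   Context: $\mathfrak g=\mathfrak{sl}(2,\mathbb C)$, $K=SO(2,\mathbb C)$, with an $\mathfrak{sl}_2$-triple $x,y,h$ ($[x,y]=h$, $[h,x]=2x$, $[h,y]=-2y$) such that $\mathfrak k=\mathbb Ch$, $\mathfrak p=\mathbb Cx\oplus\mathbb Cy$. In $\mathbb C[t]\otimes\mathfrak g$ put $\tilde x=t\otimes x$, $\tilde y=t\otimes y$, $\tilde h=1\otimes h$; the deformation family is $\boldsymbol{\mathfrak g}_d=\boldsymbol{\mathfrak k}\oplus\boldsymbol{\mathfrak p}_d$, $\boldsymbol{\mathfrak k}=\mathbb C[t]\tilde h$, $\boldsymbol{\mathfrak p}_d=\mathbb C[t]\tilde x\oplus\mathbb C[t]\tilde y$, with $[\tilde h,\tilde x]=2\tilde x$, $[\tilde h,\tilde y]=-2\tilde y$, $[\tilde x,\tilde y]=t^2\tilde h$. The form $\boldsymbol\beta_d$ on $\boldsymbol{\mathfrak p}_d$ has $\boldsymbol\beta_d(\tilde x,\tilde x)=\boldsymbol\beta_d(\tilde y,\tilde y)=0$, $\boldsymbol\beta_d(\tilde x,\tilde y)=4$; $Cl(\boldsymbol{\mathfrak p}_d)$ its Clifford algebra ($XY+YX=\boldsymbol\beta_d(X,Y)$) with canonical map $\gamma_d$. Spin module $\boldsymbol S_d=\bigwedge(\mathbb C[t]\tilde y)=\mathbb C[t]1\oplus\mathbb C[t]\tilde y$ with $\gamma_d(\tilde x)1=0$, $\gamma_d(\tilde x)\tilde y=4$, $\gamma_d(\tilde y)1=\tilde y$,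 $\gamma_d(\tilde y)\tilde y=0$; $\tilde h$ acts on $\boldsymbol S_d$ by $\frac12\gamma_d(\tilde x)\gamma_d(\tilde y)-1$ (weights $1$ on $1$, $-1$ on $\tilde y$), and on $\boldsymbol V\otimes\boldsymbol S_d$ diagonally. Dirac operator $D_d=\frac14(\tilde x\otimes\gamma_d(\tilde y)+\tilde y\otimes\gamma_d(\tilde x))$ acting on $\boldsymbol V\otimes_{\mathbb C[t]}\boldsymbol S_d$; $H_{D_d}(\boldsymbol V)=\ker D_d/(\ker D_d\cap\mathrm{im}D_d)$. A generically irreducible $(\boldsymbol{\mathfrak g}_d,K)$-module (flat $\mathbb C[t]$-module with compatible actions, all but countably many fibers irreducible) decomposes as $\boldsymbol V=\bigoplus_{j\in\mathcal K(\boldsymbol V)}\boldsymbol V_j$, $\tilde h$ acting on $\boldsymbol V_j$ by $j$, each $\boldsymbol V_j$ free of rank one with generator $v_j$; $\mathcal K(\boldsymbol V)$ (the set of $K$-types, identified with $\tilde h$-weights) equals the $K$-type set of some irreducible $(\mathfrak{sl}(2,\mathbb C),K)$-module, i.e. one of $\{m,m+2,\dots\}$, $\{-m,-m-2,\dots\}$ ($m\ge1$), $\{-m,\dots,m\}$ ($m\ge0$), $2\mathbb Z$, $2\mathbb Z+1$. *)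

theory Defs
  imports "HOL-Computational_Algebra.Polynomial" "HOL-Library.Countable_Set"
begin

text \<open>Concrete model of a generically irreducible (g_d,K)-module V over C[t] via the
  standing decomposition V = (direct sum over j in K) C[t] v_j:
  x~ v_j = a j * v_(j+2),  y~ v_j = b j * v_(j-2),  h~ v_j = j v_j.\<close>

type_synonym cpoly = "complex poly"
type_synonym vel = "int \<Rightarrow> cpoly"
type_synonym sel = "bool \<Rightarrow> cpoly"           \<comment> \<open>False: coefficient of 1, True: of y~\<close>
type_synonym tel = "int \<Rightarrow> bool \<Rightarrow> cpoly"

definition vbasis :: "int \<Rightarrow> vel" where
  "vbasis j = (\<lambda>i. if i = j then 1 else 0)"

definition sbasis :: "bool \<Rightarrow> sel" where
  "sbasis e = (\<lambda>e'. if e' = e then 1 else 0)"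

definition tbasis :: "int \<Rightarrow> bool \<Rightarrow> tel" where
  "tbasis j e = (\<lambda>i e'. if i = j \<and> e' = e then 1 else 0)"

definition tscale :: "cpoly \<Rightarrow> tel \<Rightarrow> tel" where
  "tscale p F = (\<lambda>i e. p * F i e)"

definition xact :: "(int \<Rightarrow> cpoly) \<Rightarrow> vel \<Rightarrow> vel" where
  "xact a f = (\<lambda>i. a (i - 2) * f (i - 2))"
definition yact :: "(int \<Rightarrow> cpoly) \<Rightarrow> vel \<Rightarrow> vel" where
  "yact b f = (\<lambda>i. b (i + 2) * f (i + 2))"
definition hact :: "vel \<Rightarrow> vel" where
  "hact f = (\<lambda>i. [:of_int i:] * f i)"

definition gx :: "sel \<Rightarrow> sel" where
  "gx s = (\<lambda>e. if e then 0 else 4 * s True)"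
definition gy :: "sel \<Rightarrow> sel" where
  "gy s = (\<lambda>e. if e then s False else 0)"
definition hS :: "sel \<Rightarrow> sel" where
  "hS s = (\<lambda>e. smult (1/2) (gx (gy s) e) - s e)"

definition tsupp :: "tel \<Rightarrow> (int \<times> bool) set" where
  "tsupp F = {p. F (fst p) (snd p) \<noteq> 0}"

definition tensor_op :: "(vel \<Rightarrow> vel) \<Rightarrow> (sel \<Rightarrow> sel) \<Rightarrow> tel \<Rightarrow> tel" where
  "tensor_op A B F = (\<lambda>i e'. \<Sum>p\<in>tsupp F.
      F (fst p) (snd p) * A (vbasis (fst p)) i * B (sbasis (snd p)) e')"

definition dirac :: "(int \<Rightarrow> cpoly) \<Rightarrow> (int \<Rightarrow> cpoly) \<Rightarrow> tel \<Rightarrow> tel" where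
  "dirac a b F = (\<lambda>i e. smult (1/4)
      (tensor_op (xact a) gy F i e + tensor_op (yact b) gx F i e))"

definition htens :: "tel \<Rightarrow> tel" where
  "htens F = (\<lambda>i e. tensor_op hact id F i e + tensor_op id hS F i e)"

definition tspace :: "int set \<Rightarrow> tel set" where
  "tspace K = {F. finite (tsupp F) \<and> (\<forall>j e. F j e \<noteq> 0 \<longrightarrow> j \<in> K)}"

definition kerD :: "int set \<Rightarrow> (int \<Rightarrow> cpoly) \<Rightarrow> (int \<Rightarrow> cpoly) \<Rightarrow> tel set" where
  "kerD K a b = {F \<in> tspace K. dirac a b F = (\<lambda>_ _. 0)}"

definition imD :: "int set \<Rightarrow> (int \<Rightarrow> cpoly) \<Rightarrow> (int \<Rightarrow> cpoly) \<Rightarrow> tel set" where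
  "imD K a b = dirac a b ` tspace K"

text \<open>H_D(V) = ker D / (ker D \<inter> im D) vanishes.\<close>
definition HD_zero :: "int set \<Rightarrow> (int \<Rightarrow> cpoly) \<Rightarrow> (int \<Rightarrow> cpoly) \<Rightarrow> bool" where
  "HD_zero K a b \<longleftrightarrow> kerD K a b \<subseteq> imD K a b"

text \<open>H_D(V) is free over C[t] on the class of u, i.e. p \<mapsto> [p u] is a bijection C[t] \<rightarrow> H_D(V).\<close>
definition HD_free1 :: "int set \<Rightarrow> (int \<Rightarrow> cpoly) \<Rightarrow> (int \<Rightarrow> cpoly) \<Rightarrow> tel \<Rightarrow> bool" where
  "HD_free1 K a b u \<longleftrightarrow> u \<in> kerD K a b \<and>
     (\<forall>F\<in>kerD K a b. \<exists>!p. (\<lambda>i e. F i e - p * u i e) \<in> imD K a b)"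

definition HD_free2 :: "int set \<Rightarrow> (int \<Rightarrow> cpoly) \<Rightarrow> (int \<Rightarrow> cpoly) \<Rightarrow> tel \<Rightarrow> tel \<Rightarrow> bool" where
  "HD_free2 K a b u1 u2 \<longleftrightarrow> u1 \<in> kerD K a b \<and> u2 \<in> kerD K a b \<and>
     (\<forall>F\<in>kerD K a b. \<exists>!pq. (\<lambda>i e. F i e - fst pq * u1 i e - snd pq * u2 i e) \<in> imD K a b)"

text \<open>(g_d,K)-module axioms: x~ V_j \<subseteq> V_(j+2), y~ V_j \<subseteq> V_(j-2), [x~,y~] = t^2 h~.\<close>
definition gK_module :: "int set \<Rightarrow> (int \<Rightarrow> cpoly) \<Rightarrow> (int \<Rightarrow> cpoly) \<Rightarrow> bool" where
  "gK_module K a b \<longleftrightarrow>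
     (\<forall>j\<in>K. j + 2 \<notin> K \<longrightarrow> a j = 0) \<and>
     (\<forall>j\<in>K. j - 2 \<notin> K \<longrightarrow> b j = 0) \<and>
     (\<forall>j\<in>K. b j * a (j - 2) - a j * b (j + 2) = monom (of_int j) 2)"

text \<open>Fibre at t = s: the complex space with basis v_j (j \<in> K).\<close>
definition fspace :: "int set \<Rightarrow> (int \<Rightarrow> complex) set" where
  "fspace K = {f. finite {i. f i \<noteq> 0} \<and> (\<forall>i. f i \<noteq> 0 \<longrightarrow> i \<in> K)}"

definition fx :: "(int \<Rightarrow> cpoly) \<Rightarrow> complex \<Rightarrow> (int \<Rightarrow> complex) \<Rightarrow> int \<Rightarrow> complex" where
  "fx a s f = (\<lambda>i. poly (a (i - 2)) s * f (i - 2))"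
definition fy :: "(int \<Rightarrow> cpoly) \<Rightarrow> complex \<Rightarrow> (int \<Rightarrow> complex) \<Rightarrow> int \<Rightarrow> complex" where
  "fy b s f = (\<lambda>i. poly (b (i + 2)) s * f (i + 2))"
definition fh :: "(int \<Rightarrow> complex) \<Rightarrow> int \<Rightarrow> complex" where
  "fh f = (\<lambda>i. of_int i * f i)"
definition fk :: "complex \<Rightarrow> (int \<Rightarrow> complex) \<Rightarrow> int \<Rightarrow> complex" where
  \<comment> \<open>action of z \<in> SO(2,C) = C^*\<close>
  "fk z f = (\<lambda>i. z powi i * f i)"

definition invariant_sub ::
  "int set \<Rightarrow> (int \<Rightarrow> cpoly) \<Rightarrow> (int \<Rightarrow> cpoly) \<Rightarrow> complex \<Rightarrow> (int \<Rightarrow> complex) set \<Rightarrow> bool" where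
  "invariant_sub K a b s W \<longleftrightarrow> W \<subseteq> fspace K \<and> (\<lambda>_. 0) \<in> W \<and>
     (\<forall>f\<in>W. \<forall>g\<in>W. (\<lambda>i. f i + g i) \<in> W) \<and> (\<forall>c. \<forall>f\<in>W. (\<lambda>i. c * f i) \<in> W) \<and>
     (\<forall>f\<in>W. fx a s f \<in> W \<and> fy b s f \<in> W \<and> fh f \<in> W) \<and>
     (\<forall>z. z \<noteq> 0 \<longrightarrow> (\<forall>f\<in>W. fk z f \<in> W))"

definition fiber_irreducible :: "int set \<Rightarrow> (int \<Rightarrow> cpoly) \<Rightarrow> (int \<Rightarrow> cpoly) \<Rightarrow> complex \<Rightarrow> bool" where
  "fiber_irreducible K a b s \<longleftrightarrow> fspace K \<noteq> {\<lambda>_. 0} \<and>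
     (\<forall>W. invariant_sub K a b s W \<longrightarrow> W = {\<lambda>_. 0} \<or> W = fspace K)"

definition generically_irreducible :: "int set \<Rightarrow> (int \<Rightarrow> cpoly) \<Rightarrow> (int \<Rightarrow> cpoly) \<Rightarrow> bool" where
  "generically_irreducible K a b \<longleftrightarrow> gK_module K a b \<and>
     countable {s. \<not> fiber_irreducible K a b s}"

text \<open>K-type sets of irreducible (sl(2,C),K)-modules.\<close>
definition sl2_Ktype_set :: "int set \<Rightarrow> bool" where
  "sl2_Ktype_set K \<longleftrightarrow>
     (\<exists>m\<ge>1. K = {j. m \<le> j \<and> even (j - m)}) \<or>
     (\<exists>m\<ge>1. K = {j. j \<le> -m \<and> even (j + m)}) \<or>
     (\<exists>m\<ge>0. K = {j. -m \<le> j \<and> j \<le> m \<and> even (j - m)}) \<or>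
     K = {j. even j} \<or> K = {j. odd j}"

end

theory Submission
  imports Defs "HOL-Analysis.Continuum_Not_Denumerable"
begin

(* The Dirac operator sends v_j \<otimes> 1 to (a_j/4) v_(j+2) \<otimes> y~ and v_j \<otimes> y~ to b_j v_(j-2) \<otimes> 1.
   If a_j or b_(j+2) vanished for K-types j, j + 2, the span of the v_i on one side of j would be
   a proper submodule of every fibre, contradicting generic irreducibility. Hence D maps every
   slot injectively except v_top \<otimes> 1 and v_bottom \<otimes> y~, which it kills and which never occur
   in its image. So ker D \<inter> im D = 0 and H_D(V) = ker D is free on these extremal slots; it vanishes
   exactly when K has neither a top nor a bottom. *)

lemma tensor_op_single_term:
  assumes "finite (tsupp F)"
    and "\<And>j e. A (vbasis j) i * B (sbasis e) e' = (if (j, e) = q then c else 0)"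
  shows "tensor_op A B F i e' = F (fst q) (snd q) * c"
proof -
  have "tensor_op A B F i e' = (\<Sum>p\<in>tsupp F. if p = q then F (fst q) (snd q) * c else 0)"
    unfolding tensor_op_def
  proof (rule sum.cong)
    fix p
    show "F (fst p) (snd p) * A (vbasis (fst p)) i * B (sbasis (snd p)) e' =
      (if p = q then F (fst q) (snd q) * c else 0)"
      using assms(2)[of "fst p" "snd p"] by (cases p) (auto simp: mult.assoc)
  qed simp
  also have "\<dots> = F (fst q) (snd q) * c"
    using assms(1) by (auto simp: tsupp_def)
  finally show ?thesis .
qed

lemma dirac_apply:
  assumes "finite (tsupp F)"
  shows "dirac a b F i True = smult (1/4) (a (i - 2) * F (i - 2) False)"
    and "dirac a b F i False = b (i + 2) * F (i + 2) True"
proof -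
  have x: "tensor_op (xact a) gy F i e = F (i - 2) False * (if e then a (i - 2) else 0)" for e
    by (rule tensor_op_single_term[OF assms, where q="(i - 2, False)", simplified])
       (auto simp: xact_def gy_def vbasis_def sbasis_def)
  have y: "tensor_op (yact b) gx F i e = F (i + 2) True * (if e then 0 else 4 * b (i + 2))" for e
    by (rule tensor_op_single_term[OF assms, where q="(i + 2, True)", simplified])
       (auto simp: yact_def gx_def vbasis_def sbasis_def)
  have quarter: "smult (1/4) (4 * p) = (p :: complex poly)" for p
    by (simp add: numeral_poly)
  show "dirac a b F i True = smult (1/4) (a (i - 2) * F (i - 2) False)"
    and "dirac a b F i False = b (i + 2) * F (i + 2) True"
    unfolding dirac_def x y by (simp_all add: quarter ac_simps)
qed

lemma mem_tsupp_iff [simp]: "(j, e) \<in> tsupp F \<longleftrightarrow> F j e \<noteq> 0"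
  by (simp add: tsupp_def)

lemma tsupp_tbasis [simp]: "tsupp (tbasis j e) = {(j, e)}"
  by (auto simp: tsupp_def tbasis_def)

lemma htens_tbasis:
  "htens (tbasis j e) = tscale [:of_int (if e then j - 1 else j + 1):] (tbasis j e)"
proof (intro ext)
  fix i e'
  have fin: "finite (tsupp (tbasis j e))" by simp
  have h: "tensor_op hact id (tbasis j e) i e' = tbasis j e i e' * [:of_int i:]"
    by (rule tensor_op_single_term[OF fin, where q="(i, e')", simplified])
       (auto simp: hact_def vbasis_def sbasis_def)
  have "smult (1/2) (4::complex poly) = 2" by (simp add: numeral_poly)
  then have s: "tensor_op id hS (tbasis j e) i e' = tbasis j e i e' * (if e' then -1 else 1)"
    by (intro tensor_op_single_term[OF fin, where q="(i, e')", simplified])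
       (auto simp: hS_def gx_def gy_def vbasis_def sbasis_def)
  show "htens (tbasis j e) i e' = tscale [:of_int (if e then j - 1 else j + 1):] (tbasis j e) i e'"
    unfolding htens_def h s tscale_def by (auto simp: tbasis_def algebra_simps one_pCons)
qed

definition fiber_span :: "int set \<Rightarrow> int set \<Rightarrow> (int \<Rightarrow> complex) set" where
  "fiber_span K S = {f \<in> fspace K. \<forall>i. f i \<noteq> 0 \<longrightarrow> i \<in> S}"

lemma finite_nonzero_shift:
  fixes f :: "int \<Rightarrow> complex" and c :: int
  assumes "finite {i. f i \<noteq> 0}"
  shows "finite {i. g i * f (i + c) \<noteq> 0}"
proof -
  have "{i. g i * f (i + c) \<noteq> 0} \<subseteq> (\<lambda>i. i - c) ` {i. f i \<noteq> 0}"
    by (auto intro!: image_eqI[where x="_ + c"])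
  then show ?thesis using assms finite_subset by blast
qed

lemma invariant_sub_fiber_span:
  assumes gK: "gK_module K a b"
    and raise: "\<And>k. k \<in> S \<inter> K \<Longrightarrow> a k \<noteq> 0 \<Longrightarrow> k + 2 \<in> S"
    and lower: "\<And>k. k \<in> S \<inter> K \<Longrightarrow> b k \<noteq> 0 \<Longrightarrow> k - 2 \<in> S"
  shows "invariant_sub K a b s (fiber_span K S)"
  unfolding invariant_sub_def
proof (intro conjI ballI allI impI)
  fix f assume f: "f \<in> fiber_span K S"
  then have fin: "finite {i. f i \<noteq> 0}" and supp: "\<And>i. f i \<noteq> 0 \<Longrightarrow> i \<in> S \<inter> K"
    by (auto simp: fiber_span_def fspace_def)
  have "finite {i. poly (a (i - 2)) s * f (i - 2) \<noteq> 0}"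
    using finite_nonzero_shift[OF fin, of _ "-2"] by simp
  moreover have "i \<in> S \<inter> K" if "poly (a (i - 2)) s * f (i - 2) \<noteq> 0" for i
  proof -
    have "a (i - 2) \<noteq> 0" and "f (i - 2) \<noteq> 0" using that by auto
    then show ?thesis using supp raise gK unfolding gK_module_def by fastforce
  qed
  ultimately show "fx a s f \<in> fiber_span K S"
    by (auto simp: fx_def fiber_span_def fspace_def)
  have "finite {i. poly (b (i + 2)) s * f (i + 2) \<noteq> 0}"
    using finite_nonzero_shift[OF fin] by simp
  moreover have "i \<in> S \<inter> K" if "poly (b (i + 2)) s * f (i + 2) \<noteq> 0" for i
  proof -
    have "b (i + 2) \<noteq> 0" and "f (i + 2) \<noteq> 0" using that by auto
    then show ?thesis using supp lower gK unfolding gK_module_def by fastforce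
  qed
  ultimately show "fy b s f \<in> fiber_span K S"
    by (auto simp: fy_def fiber_span_def fspace_def)
  show "fh f \<in> fiber_span K S"
    using f by (auto simp: fh_def fiber_span_def fspace_def intro: finite_subset[OF _ fin])
  fix z :: complex
  show "fk z f \<in> fiber_span K S"
    using f by (auto simp: fk_def fiber_span_def fspace_def intro: finite_subset[OF _ fin])
  show "(\<lambda>i. z * f i) \<in> fiber_span K S"
    using f by (auto simp: fiber_span_def fspace_def intro: finite_subset[OF _ fin])
next
  fix f g assume "f \<in> fiber_span K S" "g \<in> fiber_span K S"
  then show "(\<lambda>i. f i + g i) \<in> fiber_span K S"
    unfolding fiber_span_def fspace_def
    by (auto intro: finite_subset[where B="{i. f i \<noteq> 0} \<union> {i. g i \<noteq> 0}"]) (metis add_0)+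
qed (auto simp: fiber_span_def fspace_def)

lemma not_fiber_irreducible_if_invariant_weights:
  assumes gK: "gK_module K a b"
    and raise: "\<And>k. k \<in> S \<inter> K \<Longrightarrow> a k \<noteq> 0 \<Longrightarrow> k + 2 \<in> S"
    and lower: "\<And>k. k \<in> S \<inter> K \<Longrightarrow> b k \<noteq> 0 \<Longrightarrow> k - 2 \<in> S"
    and inside: "j \<in> S \<inter> K" and outside: "j' \<in> K - S"
  shows "\<not> fiber_irreducible K a b s"
proof
  assume "fiber_irreducible K a b s"
  moreover have "invariant_sub K a b s (fiber_span K S)"
    using invariant_sub_fiber_span[OF gK raise lower] by blast
  moreover have "(\<lambda>i. if i = j then 1 else 0) \<in> fiber_span K S"
    using inside by (auto simp: fiber_span_def fspace_def)
  moreover have "(\<lambda>i. if i = j then (1::complex) else 0) \<noteq> (\<lambda>_. 0)"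
    by (metis one_neq_zero)
  moreover have "(\<lambda>i. if i = j' then 1 else 0) \<in> fspace K - fiber_span K S"
    using outside by (auto simp: fiber_span_def fspace_def)
  ultimately show False
    unfolding fiber_irreducible_def by blast
qed

lemma generically_irreducible_ex_fiber_irreducible:
  assumes "generically_irreducible K a b"
  obtains s where "fiber_irreducible K a b s"
proof -
  have "{s. \<not> fiber_irreducible K a b s} \<noteq> UNIV"
    using assms uncountable_UNIV_complex by (auto simp: generically_irreducible_def)
  then show ?thesis using that by blast
qed

definition connected_Ktypes :: "int set \<Rightarrow> (int \<Rightarrow> cpoly) \<Rightarrow> (int \<Rightarrow> cpoly) \<Rightarrow> bool" where
  "connected_Ktypes K a b \<longleftrightarrow> (\<forall>j\<in>K. j + 2 \<in> K \<longrightarrow> a j \<noteq> 0 \<and> b (j + 2) \<noteq> 0)"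

lemma generically_irreducible_connected_Ktypes:
  assumes gi: "generically_irreducible K a b"
  shows "connected_Ktypes K a b"
  unfolding connected_Ktypes_def
proof (intro ballI impI conjI notI)
  fix j assume j: "j \<in> K" "j + 2 \<in> K"
  have gK: "gK_module K a b" using gi by (simp add: generically_irreducible_def)
  obtain s where irr: "fiber_irreducible K a b s"
    using generically_irreducible_ex_fiber_irreducible[OF gi] .
  show False if a0: "a j = 0"
  proof -
    have "k + 2 \<le> j" if "k \<le> j" "even (k - j)" "a k \<noteq> 0" for k
      using that a0 by (cases "k = j") (simp, presburger)
    then have "\<not> fiber_irreducible K a b s"
      using j by (intro not_fiber_irreducible_if_invariant_weights[OF gK,
          where S="{i. i \<le> j \<and> even (i - j)}" and j=j and j'="j + 2"]) auto
    then show False using irr by blast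
  qed
  show False if b0: "b (j + 2) = 0"
  proof -
    have "j + 2 \<le> k - 2" if "j + 2 \<le> k" "even (k - j)" "b k \<noteq> 0" for k
      using that b0 by (cases "k = j + 2") (simp, presburger)
    then have "\<not> fiber_irreducible K a b s"
      using j by (intro not_fiber_irreducible_if_invariant_weights[OF gK,
          where S="{i. j + 2 \<le> i \<and> even (i - j)}" and j="j + 2" and j'=j]) auto
    then show False using irr by blast
  qed
qed

definition extremal_slots :: "int set \<Rightarrow> (int \<times> bool) set" where
  "extremal_slots K =
     {(j, False) | j. j \<in> K \<and> j + 2 \<notin> K} \<union> {(j, True) | j. j \<in> K \<and> j - 2 \<notin> K}"

lemma extremal_slots_iff [simp]:
  "(j, False) \<in> extremal_slots K \<longleftrightarrow> j \<in> K \<and> j + 2 \<notin> K"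
  "(j, True) \<in> extremal_slots K \<longleftrightarrow> j \<in> K \<and> j - 2 \<notin> K"
  by (auto simp: extremal_slots_def)

lemma imD_vanishes_on_extremal_slots:
  assumes "G \<in> imD K a b" and "(j, e) \<in> extremal_slots K"
  shows "G j e = 0"
proof -
  obtain F where F: "F \<in> tspace K" "G = dirac a b F"
    using assms(1) by (auto simp: imD_def)
  have "finite (tsupp F)" and "\<And>i e. F i e \<noteq> 0 \<Longrightarrow> i \<in> K"
    using F(1) by (auto simp: tspace_def)
  then show ?thesis
    using assms(2) F(2) dirac_apply by (cases e) fastforce+
qed

lemma kerD_tsupp_extremal:
  assumes conn: "connected_Ktypes K a b" and F: "F \<in> kerD K a b"
  shows "tsupp F \<subseteq> extremal_slots K"
proof
  fix p assume p: "p \<in> tsupp F"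
  obtain j e where [simp]: "p = (j, e)" by fastforce
  have fin: "finite (tsupp F)" and jK: "j \<in> K" and nz: "F j e \<noteq> 0"
    and D: "\<And>i e. dirac a b F i e = 0"
    using F p by (auto simp: tspace_def kerD_def tsupp_def)
  show "p \<in> extremal_slots K"
  proof (cases e)
    case False
    have "j + 2 \<notin> K"
      using D[of "j + 2" True] conn jK nz False by (auto simp: dirac_apply[OF fin] connected_Ktypes_def)
    then show ?thesis using jK False by simp
  next
    case True
    have "j - 2 \<notin> K"
      using D[of "j - 2" False] conn jK nz True by (auto simp: dirac_apply[OF fin] connected_Ktypes_def)
    then show ?thesis using jK True by simp
  qed
qed

lemma kerD_if_tsupp_extremal:
  assumes gK: "gK_module K a b" and fin: "finite (tsupp F)"
    and supp: "tsupp F \<subseteq> extremal_slots K"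
  shows "F \<in> kerD K a b"
proof -
  have top: "a j = 0" if "F j False \<noteq> 0" for j
    using subsetD[OF supp, of "(j, False)"] that gK unfolding gK_module_def by simp
  have bottom: "b j = 0" if "F j True \<noteq> 0" for j
    using subsetD[OF supp, of "(j, True)"] that gK unfolding gK_module_def by simp
  have "a j * F j False = 0" "b j * F j True = 0" for j
    using top[of j] bottom[of j] by auto
  then have "dirac a b F i e = 0" for i e
    by (cases e) (simp_all add: dirac_apply[OF fin])
  moreover have "i \<in> K" if "F i e \<noteq> 0" for i e
    using subsetD[OF supp, of "(i, e)"] that by (cases e) simp_all
  ultimately show ?thesis
    using fin by (auto simp: kerD_def tspace_def)
qed

lemma zero_in_imD: "(\<lambda>_ _. 0) \<in> imD K a b"
proof -
  have "(\<lambda>_ _. 0) \<in> tspace K" by (simp add: tspace_def tsupp_def)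
  moreover have "dirac a b (\<lambda>_ _. 0) = (\<lambda>_ _. 0)"
  proof (intro ext)
    show "dirac a b (\<lambda>_ _. 0) i e = 0" for i e
      by (cases e) (simp_all add: dirac_apply tsupp_def)
  qed
  ultimately show ?thesis unfolding imD_def by (metis image_eqI)
qed

lemma kerD_diff_in_imD_iff:
  assumes conn: "connected_Ktypes K a b" and F: "F \<in> kerD K a b" and G: "G \<in> kerD K a b"
  shows "(\<lambda>i e. F i e - G i e) \<in> imD K a b \<longleftrightarrow> F = G"
proof
  assume im: "(\<lambda>i e. F i e - G i e) \<in> imD K a b"
  show "F = G"
  proof (intro ext)
    fix i e
    show "F i e = G i e"
    proof (cases "(i, e) \<in> extremal_slots K")
      case True
      then show ?thesis using imD_vanishes_on_extremal_slots[OF im] by simp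
    next
      case False
      then have "(i, e) \<notin> tsupp F" and "(i, e) \<notin> tsupp G"
        using kerD_tsupp_extremal[OF conn F] kerD_tsupp_extremal[OF conn G] by blast+
      then show ?thesis by simp
    qed
  qed
qed (simp add: zero_in_imD)

lemma HD_zero_iff_no_extremal_slots:
  assumes gK: "gK_module K a b" and conn: "connected_Ktypes K a b"
  shows "HD_zero K a b \<longleftrightarrow> extremal_slots K = {}"
proof -
  have zero_ker: "(\<lambda>_ _. 0) \<in> kerD K a b"
    by (rule kerD_if_tsupp_extremal[OF gK]) (simp_all add: tsupp_def)
  have "HD_zero K a b \<longleftrightarrow> kerD K a b \<subseteq> {\<lambda>_ _. 0}"
    using kerD_diff_in_imD_iff[OF conn _ zero_ker] by (auto simp: HD_zero_def)
  also have "\<dots> \<longleftrightarrow> extremal_slots K = {}"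
  proof
    assume ker: "kerD K a b \<subseteq> {\<lambda>_ _. 0}"
    show "extremal_slots K = {}"
    proof (rule ccontr)
      assume "extremal_slots K \<noteq> {}"
      then obtain j e where "(j, e) \<in> extremal_slots K" by auto
      then have "tbasis j e \<in> kerD K a b"
        by (intro kerD_if_tsupp_extremal[OF gK]) simp_all
      then have "tbasis j e = (\<lambda>_ _. 0)"
        using ker by blast
      then have "tbasis j e j e = 0" by simp
      then show False by (simp add: tbasis_def)
    qed
  next
    assume none: "extremal_slots K = {}"
    show "kerD K a b \<subseteq> {\<lambda>_ _. 0}"
    proof
      fix F assume "F \<in> kerD K a b"
      then have "(i, e) \<notin> tsupp F" for i e
        using kerD_tsupp_extremal[OF conn] none by blast
      then show "F \<in> {\<lambda>_ _. 0}" by (simp add: fun_eq_iff)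
    qed
  qed
  finally show ?thesis .
qed

lemma HD_free1_tbasis:
  assumes gK: "gK_module K a b" and conn: "connected_Ktypes K a b"
    and slots: "extremal_slots K = {(j, e)}"
  shows "HD_free1 K a b (tbasis j e)"
  unfolding HD_free1_def
proof (intro conjI ballI)
  have multiple_in_kerD: "tscale p (tbasis j e) \<in> kerD K a b" for p
  proof (rule kerD_if_tsupp_extremal[OF gK])
    show supp: "tsupp (tscale p (tbasis j e)) \<subseteq> extremal_slots K"
      unfolding slots by (auto simp: tsupp_def tscale_def tbasis_def)
    show "finite (tsupp (tscale p (tbasis j e)))"
      using finite_subset[OF supp] slots by simp
  qed
  show "tbasis j e \<in> kerD K a b"
    using multiple_in_kerD[of 1] by (simp add: tscale_def)
  fix F assume F: "F \<in> kerD K a b"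
  have F0: "F i e' = 0" if "(i, e') \<noteq> (j, e)" for i e'
    using that kerD_tsupp_extremal[OF conn F] slots mem_tsupp_iff[of i e' F] by blast
  have "F = tscale p (tbasis j e) \<longleftrightarrow> p = F j e" for p
    using F0 by (auto simp: tscale_def tbasis_def fun_eq_iff)
  then have "(\<lambda>i e'. F i e' - p * tbasis j e i e') \<in> imD K a b \<longleftrightarrow> p = F j e" for p
    using kerD_diff_in_imD_iff[OF conn F multiple_in_kerD] unfolding tscale_def by simp
  then show "\<exists>!p. (\<lambda>i e'. F i e' - p * tbasis j e i e') \<in> imD K a b"
    by simp
qed

lemma HD_free2_tbasis:
  assumes gK: "gK_module K a b" and conn: "connected_Ktypes K a b"
    and slots: "extremal_slots K = {(j1, e1), (j2, e2)}" and distinct: "(j1, e1) \<noteq> (j2, e2)"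
  shows "HD_free2 K a b (tbasis j1 e1) (tbasis j2 e2)"
  unfolding HD_free2_def
proof (intro conjI ballI)
  define comb where "comb pq = (\<lambda>i e. fst pq * tbasis j1 e1 i e + snd pq * tbasis j2 e2 i e)"
    for pq :: "cpoly \<times> cpoly"
  have comb_at: "comb pq j1 e1 = fst pq" "comb pq j2 e2 = snd pq" for pq
    using distinct by (auto simp: comb_def tbasis_def)
  have comb_off: "comb pq i e = 0" if "(i, e) \<noteq> (j1, e1)" and "(i, e) \<noteq> (j2, e2)" for pq i e
    using that by (auto simp: comb_def tbasis_def)
  have comb_in_kerD: "comb pq \<in> kerD K a b" for pq
  proof (rule kerD_if_tsupp_extremal[OF gK])
    show supp: "tsupp (comb pq) \<subseteq> extremal_slots K"
    proof
      fix p assume "p \<in> tsupp (comb pq)"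
      then show "p \<in> extremal_slots K"
        unfolding slots by (cases p) (metis comb_off insertCI mem_tsupp_iff)
    qed
    show "finite (tsupp (comb pq))"
      using finite_subset[OF supp] slots by simp
  qed
  show "tbasis j1 e1 \<in> kerD K a b" and "tbasis j2 e2 \<in> kerD K a b"
    using comb_in_kerD[of "(1, 0)"] comb_in_kerD[of "(0, 1)"] by (simp_all add: comb_def)
  fix F assume F: "F \<in> kerD K a b"
  have F0: "F i e = 0" if "(i, e) \<noteq> (j1, e1)" and "(i, e) \<noteq> (j2, e2)" for i e
  proof -
    have "(i, e) \<notin> extremal_slots K" using that slots by simp
    then show ?thesis using kerD_tsupp_extremal[OF conn F] mem_tsupp_iff by blast
  qed
  have "F = comb pq \<longleftrightarrow> pq = (F j1 e1, F j2 e2)" for pq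
  proof
    assume "F = comb pq"
    then show "pq = (F j1 e1, F j2 e2)" by (simp add: comb_at)
  next
    assume pq: "pq = (F j1 e1, F j2 e2)"
    show "F = comb pq"
    proof (intro ext)
      fix i e
      consider "(i, e) = (j1, e1)" | "(i, e) = (j2, e2)" | "(i, e) \<noteq> (j1, e1)" "(i, e) \<noteq> (j2, e2)"
        by blast
      then show "F i e = comb pq i e"
        by cases (use F0 comb_off comb_at pq in auto)
    qed
  qed
  then have "(\<lambda>i e. F i e - fst pq * tbasis j1 e1 i e - snd pq * tbasis j2 e2 i e) \<in> imD K a b
      \<longleftrightarrow> pq = (F j1 e1, F j2 e2)" for pq
    using kerD_diff_in_imD_iff[OF conn F comb_in_kerD] unfolding comb_def by (simp add: diff_diff_eq)
  then show "\<exists>!pq. (\<lambda>i e. F i e - fst pq * tbasis j1 e1 i e - snd pq * tbasis j2 e2 i e)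
      \<in> imD K a b"
    by simp
qed

lemma extremal_slots_bounded_below: "extremal_slots {j. m \<le> j \<and> even (j - m)} = {(m, True)}"
  unfolding extremal_slots_def by auto presburger+

lemma extremal_slots_bounded_above: "extremal_slots {j. j \<le> n \<and> even (j - n)} = {(n, False)}"
  unfolding extremal_slots_def by auto presburger+

lemma extremal_slots_bounded:
  assumes "m \<ge> 0"
  shows "extremal_slots {j. -m \<le> j \<and> j \<le> m \<and> even (j - m)} = {(m, False), (-m, True)}"
  using assms unfolding extremal_slots_def by auto presburger+

lemma extremal_slots_even: "extremal_slots {j. even j} = {}"
  and extremal_slots_odd: "extremal_slots {j. odd j} = {}"
  unfolding extremal_slots_def by auto

lemma sl2_Ktype_set_no_extremal_slots_iff:
  assumes "sl2_Ktype_set K"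
  shows "extremal_slots K = {} \<longleftrightarrow> K = {j. even j} \<or> K = {j. odd j}"
proof
  assume none: "extremal_slots K = {}"
  from assms consider
      m where "K = {j. m \<le> j \<and> even (j - m)}"
    | m where "K = {j. j \<le> -m \<and> even (j + m)}"
    | m where "m \<ge> 0" "K = {j. -m \<le> j \<and> j \<le> m \<and> even (j - m)}"
    | "K = {j. even j} \<or> K = {j. odd j}"
    unfolding sl2_Ktype_set_def by blast
  then show "K = {j. even j} \<or> K = {j. odd j}"
  proof cases
    case (2 m)
    then show ?thesis using none extremal_slots_bounded_above[of "-m"] by simp
  qed (use none extremal_slots_bounded_below extremal_slots_bounded in simp_all)
qed (auto simp: extremal_slots_even extremal_slots_odd)

theorem mainTheorem15:
  fixes K :: "int set" and a b :: "int \<Rightarrow> complex poly"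
  assumes "generically_irreducible K a b"
    and "sl2_Ktype_set K"
  shows "(HD_zero K a b \<longleftrightarrow> K = {j. even j} \<or> K = {j. odd j})
    \<and> (\<forall>m::int. m \<ge> 1 \<longrightarrow> K = {j. m \<le> j \<and> even (j - m)} \<longrightarrow>
          HD_free1 K a b (tbasis m True)
          \<and> htens (tbasis m True) = tscale [:of_int (m - 1):] (tbasis m True))
    \<and> (\<forall>m::int. m \<ge> 1 \<longrightarrow> K = {j. j \<le> -m \<and> even (j + m)} \<longrightarrow>
          HD_free1 K a b (tbasis (-m) False)
          \<and> htens (tbasis (-m) False) = tscale [:of_int (-m + 1):] (tbasis (-m) False))
    \<and> (\<forall>m::int. m \<ge> 0 \<longrightarrow> K = {j. -m \<le> j \<and> j \<le> m \<and> even (j - m)} \<longrightarrow>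
          HD_free2 K a b (tbasis m False) (tbasis (-m) True)
          \<and> htens (tbasis m False) = tscale [:of_int (m + 1):] (tbasis m False)
          \<and> htens (tbasis (-m) True) = tscale [:of_int (-m - 1):] (tbasis (-m) True))"
proof -
  have gK: "gK_module K a b"
    using assms(1) by (simp add: generically_irreducible_def)
  have conn: "connected_Ktypes K a b"
    using generically_irreducible_connected_Ktypes[OF assms(1)] .
  note free1 = HD_free1_tbasis[OF gK conn] and free2 = HD_free2_tbasis[OF gK conn]
  show ?thesis
  proof (intro conjI allI impI)
    show "HD_zero K a b \<longleftrightarrow> K = {j. even j} \<or> K = {j. odd j}"
      using HD_zero_iff_no_extremal_slots[OF gK conn] sl2_Ktype_set_no_extremal_slots_iff[OF assms(2)]
      by simp
    fix m :: int
    show "K = {j. m \<le> j \<and> even (j - m)} \<Longrightarrow> HD_free1 K a b (tbasis m True)"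
      using extremal_slots_bounded_below by (intro free1) simp
    show "K = {j. j \<le> -m \<and> even (j + m)} \<Longrightarrow> HD_free1 K a b (tbasis (-m) False)"
      using extremal_slots_bounded_above[of "-m"] by (intro free1) simp
    show "m \<ge> 0 \<Longrightarrow> K = {j. -m \<le> j \<and> j \<le> m \<and> even (j - m)} \<Longrightarrow>
        HD_free2 K a b (tbasis m False) (tbasis (-m) True)"
      using extremal_slots_bounded by (intro free2) simp_all
  qed (simp_all add: htens_tbasis)
qed

end
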